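(* For every infinite binary word $\mathbf{x}$ the following equivalences hold: $\mathbf{x}\in A\iff\mu(\mathbf{x})\in A$; $\mathbf{x}\in B\iff 0\mu(\mathbf{x})\in A$; $\mathbf{x}\in C\iff 00\mu(\mathbf{x})\in A$; $\mathbf{x}\in D\iff 1\mu(\mathbf{x})\in A$; $\mathbf{x}\in E\iff 11\mu(\mathbf{x})\in A$; $\mathbf{x}\in D\iff \mu(\mathbf{x})\in B$; $\mathbf{x}\in B\iff 0\mu(\mathbf{x})\in B$; $\mathbf{x}\in E\iff 1\mu(\mathbf{x})\in B$; $\mathbf{x}\in B\iff \mu(\mathbf{x})\in D$; $\mathbf{x}\in D\iff 1\mu(\mathbf{x})\in D$; $\mathbf{x}\in C\iff 0\mu(\mathbf{x})\in D$; $\mathbf{x}\in I\iff \mu(\mathbf{x})\in E$; $\mathbf{x}\in C\iff 0\mu(\mathbf{x})\in E$; $\mathbf{x}\in F\iff \mu(\mathbf{x})\in C$; $\mathbf{x}\in E\iff 1\mu(\mathbf{x})\in C$; $\mathbf{x}\in J\iff 0\mu(\mathbf{x})\in I$; $\mathbf{x}\in G\iff 1\mu(\mathbf{x})\in F$; $\mathbf{x}\in K\iff \mu(\mathbf{x})\in J$; $\mathbf{x}\in J\iff \mu(\mathbf{x})\in K$; $\mathbf{x}\in B\iff 0\mu(\mathbf{x})\in J$; $\mathbf{x}\in C\iff 0\mu(\mathbf{x})\in K$; $\mathbf{x}\in H\iff \mu(\mathbf{x})\in G$; $\mathbf{x}\in G\iff \mu(\mathbf{x})\in H$; $\mathbf{x}\in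 D\iff 1\mu(\mathbf{x})\in G$; $\mathbf{x}\in E\iff 1\mu(\mathbf{x})\in H$.
   Context: $\Sigma=\{0,1\}$. An overlap is a word $axaxa$ with $a\in\Sigma$, $x\in\Sigma^*$; a word is overlap-free if it has no overlap as a factor. $\mathcal{O}$ is the set of right-infinite binary overlap-free words, and $\mu$ is the morphism $0\mapsto01$, $1\mapsto10$. Define the following subsets of $\Sigma^\omega$: $A=\mathcal{O}$; $B=\{\mathbf{x}: 1\mathbf{x}\in\mathcal{O}\}$; $C=\{\mathbf{x}: 1\mathbf{x}\in\mathcal{O}$ and $\mathbf{x}$ begins with $101\}$; $D=\{\mathbf{x}: 0\mathbf{x}\in\mathcal{O}\}$; $E=\{\mathbf{x}: 0\mathbf{x}\in\mathcal{O}$ and $\mathbf{x}$ begins with $010\}$; $F=\{\mathbf{x}: 0\mathbf{x}\in\mathcal{O}$ and $\mathbf{x}$ begins with $11\}$; $G=\{\mathbf{x}: 0\mathbf{x}\in\mathcal{O}$ and $\mathbf{x}$ begins with $1\}$; $H=\{\mathbf{x}: 1\mathbf{x}\in\mathcal{O}$ and $\mathbf{x}$ begins with $1\}$; $I=\{\mathbf{x}: 1\mathbf{x}\in\mathcal{O}$ and $\mathbf{x}$ begins with $00\}$; $J=\{\mathbf{x}: 1\mathbf{x}\in\mathcal{O}$ and $\mathbf{x}$ begins with $0\}$; $K=\{\mathbf{x}: 0\mathbf{x}\in\mathcal{O}$ and $\mathbf{x}$ begins with $0\}$. *)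

theory Defs
  imports Main
begin

(* Binary alphabet Sigma = {0,1} encoded as bool: False = 0, True = 1.
   Right-infinite words are functions nat => bool. *)
type_synonym iword = "nat \<Rightarrow> bool"

definition factor :: "bool list \<Rightarrow> iword \<Rightarrow> bool" where
  "factor w x \<longleftrightarrow> (\<exists>i. \<forall>j<length w. x (i + j) = w ! j)"

definition overlap :: "bool list \<Rightarrow> bool" where
  "overlap w \<longleftrightarrow> (\<exists>a u. w = [a] @ u @ [a] @ u @ [a])"

definition overlap_free :: "iword \<Rightarrow> bool" where
  "overlap_free x \<longleftrightarrow> (\<forall>w. factor w x \<longrightarrow> \<not> overlap w)"

definition OF :: "iword set" where
  "OF = {x. overlap_free x}"

definition pre :: "bool \<Rightarrow> iword \<Rightarrow> iword" where
  "pre a x = (\<lambda>n. if n = 0 then a else x (n - 1))"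

(* Thue-Morse morphism mu: 0 -> 01, 1 -> 10, applied to an infinite word *)
definition mu :: "iword \<Rightarrow> iword" where
  "mu x = (\<lambda>n. if even n then x (n div 2) else \<not> x (n div 2))"

definition begins :: "bool list \<Rightarrow> iword \<Rightarrow> bool" where
  "begins w x \<longleftrightarrow> (\<forall>j<length w. x j = w ! j)"

abbreviation L0 :: bool where "L0 \<equiv> False"
abbreviation L1 :: bool where "L1 \<equiv> True"

definition SA :: "iword set" where "SA = OF"
definition SB :: "iword set" where "SB = {x. pre L1 x \<in> OF}"
definition SC :: "iword set" where "SC = {x. pre L1 x \<in> OF \<and> begins [L1,L0,L1] x}"
definition SD :: "iword set" where "SD = {x. pre L0 x \<in> OF}"
definition SE :: "iword set" where "SE = {x. pre L0 x \<in> OF \<and> begins [L0,L1,L0] x}"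
definition SF :: "iword set" where "SF = {x. pre L0 x \<in> OF \<and> begins [L1,L1] x}"
definition SG :: "iword set" where "SG = {x. pre L0 x \<in> OF \<and> begins [L1] x}"
definition SH :: "iword set" where "SH = {x. pre L1 x \<in> OF \<and> begins [L1] x}"
definition SI :: "iword set" where "SI = {x. pre L1 x \<in> OF \<and> begins [L0,L0] x}"
definition SJ :: "iword set" where "SJ = {x. pre L1 x \<in> OF \<and> begins [L0] x}"
definition SK :: "iword set" where "SK = {x. pre L0 x \<in> OF \<and> begins [L0] x}"

end

theory Submission
  imports Defs
begin

(*
  An overlap of an infinite word z is a position i and a period p >= 1 such that
  z(i+k) = z(i+k+p) for all k <= p; z is overlap-free iff it has none
  (overlap_free_iff).  The word mu x is "two-block", a concatenation of the blocks
  01 and 10, and a two-block word has no overlap of odd period and no prefix square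
  of odd period.  Hence every overlap of mu x has even period 2q and halves to an
  overlap of x, while mu doubles every overlap of x: mu x is overlap-free iff x is.
  Prepending a letter a to a word y only adds overlaps at position 0, which are the
  prefix squares of y of period p with y(p-1) = a.  For y = mu x these are exactly
  the doubles of the prefix squares of x preceded by (not a), so  a mu(x)  is
  overlap-free iff  (not a) x  is.  Prepending a second a forces x to begin with
  (not a) a (not a), and conversely that prefix excludes all new overlaps.
  Together with  mu(a x) = a (not a) mu(x)  these facts give all 25 equivalences
  of the final theorem by unfolding the definitions of the sets A, ..., K.
*)

lemma pre_0 [simp]: "pre a y 0 = a"
  by (simp add: pre_def)

lemma pre_Suc [simp]: "pre a y (Suc n) = y n"
  by (simp add: pre_def)

lemma pre_nth: "pre a y n = (if n = 0 then a else y (n - 1))"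
  by (simp add: pre_def)

lemma mu_even [simp]: "mu x (2 * n) = x n"
  by (simp add: mu_def)

lemma mu_odd [simp]: "mu x (Suc (2 * n)) = (\<not> x n)"
  by (simp add: mu_def)

lemma mu_nth: "mu x n = (if even n then x (n div 2) else \<not> x (n div 2))"
  by (simp add: mu_def)

lemma mu_Suc_Suc: "mu y (Suc (Suc n)) = mu (\<lambda>m. y (Suc m)) n"
  by (simp add: mu_def)

lemma mu_pre: "mu (pre a x) = pre a (pre (\<not> a) (mu x))"
proof
  fix n
  consider "n = 0" | "n = 1" | m where "n = Suc (Suc m)"
    by (metis One_nat_def not0_implies_Suc)
  then show "mu (pre a x) n = pre a (pre (\<not> a) (mu x)) n"
    by cases (simp_all add: mu_Suc_Suc mu_nth)
qed

section \<open>Overlaps as periodic factors\<close>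

definition overlap_at :: "iword \<Rightarrow> nat \<Rightarrow> nat \<Rightarrow> bool" where
  "overlap_at z i p \<longleftrightarrow> 1 \<le> p \<and> (\<forall>k\<le>p. z (i + k) = z (i + k + p))"

lemma overlap_imp_periodic:
  assumes "overlap w"
  shows "\<exists>p\<ge>1. length w = 2 * p + 1 \<and> (\<forall>j\<le>p. w ! j = w ! (j + p))"
proof -
  obtain a u where w: "w = [a] @ u @ [a] @ u @ [a]"
    using assms unfolding overlap_def by blast
  have "length w = 2 * Suc (length u) + 1
      \<and> (\<forall>j\<le>Suc (length u). w ! j = w ! (j + Suc (length u)))"
    unfolding w by (auto simp: nth_append nth_Cons' le_Suc_eq)
  then show ?thesis by (intro exI[of _ "Suc (length u)"]) simp
qed

lemma periodic_imp_overlap: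
  assumes p: "p \<ge> 1" "length w = 2 * p + 1" and per: "\<forall>j\<le>p. w ! j = w ! (j + p)"
  shows "overlap w"
proof -
  let ?u = "take p w"
  have lt: "length ?u = p" using p by simp
  have w: "w = ?u @ ?u @ [w ! 0]"
  proof (rule nth_equalityI)
    show "length w = length (?u @ ?u @ [w ! 0])" using p by simp
    fix j assume "j < length w"
    then consider "j < p" | "p \<le> j" "j < 2 * p" | "j = 2 * p"
      using p by linarith
    then show "w ! j = (?u @ ?u @ [w ! 0]) ! j"
    proof cases
      case 1 then show ?thesis using lt by (simp add: nth_append)
    next
      case 2
      then have "w ! j = w ! (j - p)" using per[rule_format, of "j - p"] by simp
      then show ?thesis using 2 lt by (simp add: nth_append)
    next
      case 3
      then have "w ! j = w ! 0"
        using per[rule_format, of 0] per[rule_format, of p] by (simp add: mult_2)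
      then show ?thesis using 3 lt by (simp add: nth_append)
    qed
  qed
  have "?u = w ! 0 # tl ?u"
    using p by (cases w; cases p) auto
  then have "w = [w ! 0] @ tl ?u @ [w ! 0] @ tl ?u @ [w ! 0]"
    using w by (metis append_Cons append_Nil)
  then show ?thesis unfolding overlap_def by blast
qed

lemma overlap_free_iff: "overlap_free z \<longleftrightarrow> (\<forall>i p. \<not> overlap_at z i p)"
proof
  assume of: "overlap_free z"
  show "\<forall>i p. \<not> overlap_at z i p"
  proof (intro allI notI)
    fix i p assume o: "overlap_at z i p"
    define w where "w = map (\<lambda>j. z (i + j)) [0..<2 * p + 1]"
    have "factor w z"
      unfolding factor_def w_def by (intro exI[of _ i]) (simp del: upt_Suc)
    moreover have "overlap w"
      using o unfolding overlap_at_def w_def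
      by (intro periodic_imp_overlap) (auto simp: add.assoc simp del: upt_Suc)
    ultimately show False using of unfolding overlap_free_def by blast
  qed
next
  assume none: "\<forall>i p. \<not> overlap_at z i p"
  show "overlap_free z" unfolding overlap_free_def
  proof (intro allI impI notI)
    fix w assume "factor w z" "overlap w"
    then obtain i where i: "\<forall>j<length w. z (i + j) = w ! j"
      unfolding factor_def by blast
    obtain p where p: "p \<ge> 1" "length w = 2 * p + 1" "\<forall>j\<le>p. w ! j = w ! (j + p)"
      using overlap_imp_periodic[OF \<open>overlap w\<close>] by blast
    have "overlap_at z i p" unfolding overlap_at_def
    proof (intro conjI allI impI)
      fix k assume k: "k \<le> p"
      have "z (i + k) = w ! k" using i k p by simp
      also have "\<dots> = w ! (k + p)" using p k by simp
      also have "\<dots> = z (i + (k + p))" using i k p by simp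
      finally show "z (i + k) = z (i + k + p)" by (simp add: add.assoc)
    qed (use p in simp)
    then show False using none by blast
  qed
qed

definition prefix_square :: "iword \<Rightarrow> nat \<Rightarrow> bool" where
  "prefix_square y p \<longleftrightarrow> (\<forall>k<p. y k = y (k + p))"

lemma overlap_at_pre_0:
  "overlap_at (pre a y) 0 p \<longleftrightarrow> 1 \<le> p \<and> y (p - 1) = a \<and> prefix_square y p"
proof -
  have "(\<forall>k\<le>p. pre a y k = pre a y (k + p))
      \<longleftrightarrow> pre a y 0 = pre a y p \<and> (\<forall>k<p. pre a y (Suc k) = pre a y (Suc k + p))"
    by (metis (no_types) Suc_le_eq not0_implies_Suc le0 add_0)
  then show ?thesis
    unfolding overlap_at_def prefix_square_def by (auto simp: pre_nth)
qed

text \<open>Overlaps of (a y) are those of y, shifted by one, plus those at position 0.\<close>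
lemma overlap_free_pre:
  "overlap_free (pre a y) \<longleftrightarrow> overlap_free y \<and> (\<forall>p. \<not> overlap_at (pre a y) 0 p)"
proof -
  have shift: "overlap_at (pre a y) (Suc i) p \<longleftrightarrow> overlap_at y i p" for i p
    unfolding overlap_at_def by simp
  have "(\<forall>i p. \<not> overlap_at (pre a y) i p)
      \<longleftrightarrow> (\<forall>p. \<not> overlap_at (pre a y) 0 p) \<and> (\<forall>i p. \<not> overlap_at (pre a y) (Suc i) p)"
    by (metis not0_implies_Suc)
  then show ?thesis unfolding overlap_free_iff shift by blast
qed

section \<open>Two-block words have no odd overlaps\<close>

text \<open>z is a concatenation of the blocks 01 and 10, as every image under mu is.\<close>
definition two_block :: "iword \<Rightarrow> bool" where
  "two_block z \<longleftrightarrow> (\<forall>n. even n \<longrightarrow> z (Suc n) = (\<not> z n))"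

lemma two_block_mu: "two_block (mu x)"
  unfolding two_block_def by (auto simp: mu_def)

text \<open>If a shift by an odd p preserves the letters at j and j+1 for every odd j in
  [i, i+p), then z alternates on [i, i+p]: the blocks starting at even positions
  alternate by definition, and across odd j the alternation is copied from the
  block starting at the even position j+p.  Hence z(i+p) differs from z(i).\<close>
lemma two_block_odd_shift:
  assumes z: "two_block z" and p: "odd p"
    and per: "\<forall>j. i \<le> j \<and> j < i + p \<and> odd j \<longrightarrow> z j = z (j + p) \<and> z (Suc j) = z (Suc j + p)"
  shows "z (i + p) = (\<not> z i)"
proof -
  have alternates: "z (Suc j) = (\<not> z j)" if "i \<le> j" "j < i + p" for j
  proof (cases "even j")
    case True
    then show ?thesis using z unfolding two_block_def by blast
  next
    case False
    then have "z (Suc (j + p)) = (\<not> z (j + p))"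
      using z p unfolding two_block_def by simp
    then show ?thesis using per that False by auto
  qed
  have "t \<le> p \<Longrightarrow> z (i + t) = (z i = even t)" for t
  proof (induction t)
    case (Suc t)
    then show ?case using alternates[of "i + t"] by auto
  qed simp
  then show ?thesis using p by simp
qed

text \<open>An overlap of odd period p would give z(i+p) = z(i) against the shift lemma.\<close>
lemma two_block_no_odd_overlap:
  assumes "two_block z" "odd p"
  shows "\<not> overlap_at z i p"
proof
  assume "overlap_at z i p"
  then have per: "\<forall>k\<le>p. z (i + k) = z (i + k + p)"
    unfolding overlap_at_def by blast
  have "z (i + p) = (\<not> z i)"
  proof (rule two_block_odd_shift[OF assms], intro allI impI)
    fix j assume j: "i \<le> j \<and> j < i + p \<and> odd j"
    show "z j = z (j + p) \<and> z (Suc j) = z (Suc j + p)"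
      using per[rule_format, of "j - i"] per[rule_format, of "Suc j - i"] j by fastforce
  qed
  moreover have "z i = z (i + p)"
    using per[rule_format, of 0] by simp
  ultimately show False by simp
qed

text \<open>Likewise a two-block word cannot begin with a square of odd period: for odd j < p
  also j + 1 < p, so the square already provides the hypothesis of the shift lemma.\<close>
lemma two_block_no_odd_prefix_square:
  assumes "two_block z" "odd p"
  shows "\<not> prefix_square z p"
proof
  assume sq: "prefix_square z p"
  have "z (0 + p) = (\<not> z 0)"
  proof (rule two_block_odd_shift[OF assms], intro allI impI)
    fix j assume j: "0 \<le> j \<and> j < 0 + p \<and> odd j"
    then have "Suc j < p" using \<open>odd p\<close>
      by (metis add_0 le_less Suc_leI odd_Suc_minus_one even_Suc)
    then show "z j = z (j + p) \<and> z (Suc j) = z (Suc j + p)"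
      using sq j unfolding prefix_square_def by simp
  qed
  moreover have "z 0 = z p"
    using sq \<open>odd p\<close> unfolding prefix_square_def by (simp add: odd_pos)
  ultimately show False by simp
qed

section \<open>Overlaps of mu x\<close>

lemma overlap_at_mu_halves:
  assumes ov: "overlap_at (mu x) i p"
  shows "\<exists>q. p = 2 * q \<and> overlap_at x (i div 2) q"
proof -
  have "even p" using two_block_no_odd_overlap[OF two_block_mu] ov by blast
  then obtain q where q: "p = 2 * q" by (rule evenE)
  have per: "\<forall>k\<le>p. mu x (i + k) = mu x (i + k + p)" and "1 \<le> q"
    using ov q unfolding overlap_at_def by auto
  have "overlap_at x (i div 2) q" unfolding overlap_at_def
  proof (intro conjI allI impI)
    fix t assume "t \<le> q"
    then have "mu x (i + 2 * t) = mu x (i + 2 * t + 2 * q)" using per q by simp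
    moreover have "(i + 2 * t) div 2 = i div 2 + t" "(i + 2 * t + 2 * q) div 2 = i div 2 + t + q"
      by simp_all
    ultimately show "x (i div 2 + t) = x (i div 2 + t + q)"
      by (simp add: mu_nth ac_simps split: if_splits)
  qed fact
  then show ?thesis using q by blast
qed

lemma overlap_at_mu_doubles:
  assumes "overlap_at x m q"
  shows "overlap_at (mu x) (2 * m) (2 * q)"
proof -
  have per: "\<forall>t\<le>q. x (m + t) = x (m + t + q)" and "1 \<le> q"
    using assms unfolding overlap_at_def by auto
  have "mu x (2 * m + k) = mu x (2 * m + k + 2 * q)" if "k \<le> 2 * q" for k
  proof -
    have "x (m + k div 2) = x (m + k div 2 + q)" using per that by simp
    moreover have "(2 * m + k) div 2 = m + k div 2" "(2 * m + k + 2 * q) div 2 = m + k div 2 + q"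
      "even (2 * m + k) = even k" "even (2 * m + k + 2 * q) = even k"
      by simp_all
    ultimately show ?thesis unfolding mu_nth by (simp add: ac_simps)
  qed
  then show ?thesis using \<open>1 \<le> q\<close> unfolding overlap_at_def by simp
qed

lemma overlap_free_mu: "overlap_free (mu x) \<longleftrightarrow> overlap_free x"
  unfolding overlap_free_iff using overlap_at_mu_halves overlap_at_mu_doubles by blast

section \<open>One prepended letter\<close>

lemma prefix_square_mu: "prefix_square (mu x) (2 * q) \<longleftrightarrow> prefix_square x q"
proof
  assume sq: "prefix_square (mu x) (2 * q)"
  show "prefix_square x q" unfolding prefix_square_def
  proof (intro allI impI)
    fix k assume "k < q"
    then have "mu x (2 * k) = mu x (2 * k + 2 * q)"
      using sq[unfolded prefix_square_def, rule_format, of "2 * k"] by simp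
    then show "x k = x (k + q)" by (simp add: mu_nth)
  qed
next
  assume sq: "prefix_square x q"
  show "prefix_square (mu x) (2 * q)" unfolding prefix_square_def
  proof (intro allI impI)
    fix k assume "k < 2 * q"
    then have "x (k div 2) = x (k div 2 + q)"
      using sq unfolding prefix_square_def by simp
    moreover have "(k + 2 * q) div 2 = k div 2 + q" "even (k + 2 * q) = even k" by simp_all
    ultimately show "mu x k = mu x (k + 2 * q)" unfolding mu_nth by (simp add: ac_simps)
  qed
qed

text \<open>The overlaps of (a mu x) at position 0 are the doubles of those of ((not a) x);
  the letter a before a square of period 2q of mu x is the complement of x(q-1).\<close>
lemma overlap_at_pre_mu_0:
  "overlap_at (pre a (mu x)) 0 p \<longleftrightarrow> (\<exists>q. p = 2 * q \<and> overlap_at (pre (\<not> a) x) 0 q)"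
proof
  assume "overlap_at (pre a (mu x)) 0 p"
  then have p: "1 \<le> p" "mu x (p - 1) = a" and sq: "prefix_square (mu x) p"
    unfolding overlap_at_pre_0 by auto
  have "even p" using two_block_no_odd_prefix_square[OF two_block_mu] sq by blast
  then obtain q where q: "p = 2 * q" by (rule evenE)
  then have "p - 1 = Suc (2 * (q - 1))" using p by simp
  then have "x (q - 1) = (\<not> a)" using p by auto
  then have "overlap_at (pre (\<not> a) x) 0 q"
    using p q sq unfolding overlap_at_pre_0 by (simp add: prefix_square_mu)
  then show "\<exists>q. p = 2 * q \<and> overlap_at (pre (\<not> a) x) 0 q" using q by blast
next
  assume "\<exists>q. p = 2 * q \<and> overlap_at (pre (\<not> a) x) 0 q"
  then obtain q where q: "p = 2 * q" "1 \<le> q" "x (q - 1) = (\<not> a)" "prefix_square x q"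
    unfolding overlap_at_pre_0 by auto
  then have "p - 1 = Suc (2 * (q - 1))" by simp
  then have "mu x (p - 1) = a" using q by auto
  then show "overlap_at (pre a (mu x)) 0 p"
    using q unfolding overlap_at_pre_0 by (simp add: prefix_square_mu)
qed

lemma overlap_free_pre_mu: "overlap_free (pre a (mu x)) \<longleftrightarrow> overlap_free (pre (\<not> a) x)"
  unfolding overlap_free_pre[of a] overlap_free_pre[of "\<not> a"] overlap_free_mu overlap_at_pre_mu_0
  by blast

section \<open>Two equal prepended letters\<close>

text \<open>In  a a mu(x)  the short overlaps aaa, a(not a)a(not a)a and aa(not a)aa(not a)a
  are avoided only if x begins with (not a) a (not a).\<close>
lemma pre_pre_mu_forces_prefix:
  assumes "overlap_free (pre a (pre a (mu x)))"
  shows "x 0 = (\<not> a) \<and> x 1 = a \<and> x 2 = (\<not> a)"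
proof -
  let ?z = "pre a (pre a (mu x))"
  have none: "\<not> overlap_at ?z i p" for i p
    using assms unfolding overlap_free_iff by blast
  have small: "k \<le> 1 \<longleftrightarrow> k = 0 \<or> k = 1" "k \<le> 2 \<longleftrightarrow> k = 0 \<or> k = 1 \<or> k = 2"
    "k \<le> 3 \<longleftrightarrow> k = 0 \<or> k = 1 \<or> k = 2 \<or> k = 3" for k :: nat
    by auto
  have x0: "x 0 = (\<not> a)"
    using none[of 0 1] unfolding overlap_at_def small by (auto simp: pre_nth mu_nth)
  have x1: "x 1 = a"
    using none[of 1 2] x0 unfolding overlap_at_def small by (auto simp: pre_nth mu_nth)
  have x2: "x 2 = (\<not> a)"
    using none[of 0 3] x0 x1 unfolding overlap_at_def small by (auto simp: pre_nth mu_nth)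
  show ?thesis using x0 x1 x2 by blast
qed

text \<open>Conversely, that prefix excludes every overlap of  a a mu(x)  at position 0.  Such
  an overlap is a square of period p in  y = a mu(x)  with y(p-1) = a.  For even p the
  letters y(p-1), y(p) form a block of mu x, so y(p) = (not a) differs from y(0) = a;
  the odd periods 1 and 3 clash with the prefix directly, and an odd p >= 5 would
  copy the block at positions 3,4 of y, forcing x(1) = x(0).\<close>
lemma pre_pre_mu_no_overlap_0:
  assumes x: "x 0 = (\<not> a)" "x 1 = a" "x 2 = (\<not> a)"
  shows "\<not> overlap_at (pre a (pre a (mu x))) 0 p"
proof
  let ?y = "pre a (mu x)"
  have blk: "mu x (Suc n) = (\<not> mu x n)" if "even n" for n
    using two_block_mu that unfolding two_block_def by blast
  assume "overlap_at (pre a ?y) 0 p"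
  then have p: "1 \<le> p" "?y (p - 1) = a" and sq: "\<forall>k<p. ?y k = ?y (k + p)"
    unfolding overlap_at_pre_0 prefix_square_def by auto
  have "even p \<or> p = 1 \<or> p = 3 \<or> (odd p \<and> 5 \<le> p)"
    using p(1) by presburger
  then consider "even p" | "p = 1" | "p = 3" | "odd p" "5 \<le> p"
    by blast
  then show False
  proof cases
    case 1
    then have "\<exists>r. p = Suc (Suc (2 * r))"
      using p(1) by presburger
    then obtain r where r: "p = Suc (Suc (2 * r))" by blast
    have "x r = a" using p(2) r by simp
    moreover have "?y p = a" using sq[rule_format, of 0] p(1) by simp
    ultimately show False using r by simp
  next
    case 2
    then show False using sq[rule_format, of 0] x by (simp add: mu_nth)
  next
    case 3
    then show False using sq[rule_format, of 2] x by (simp add: mu_nth pre_nth)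
  next
    case 4
    have "mu x 1 = mu x (1 + p)" "mu x 2 = mu x (2 + p)"
      using sq[rule_format, of 2] sq[rule_format, of 3] 4 by (simp_all add: pre_nth)
    moreover have "mu x (2 + p) = (\<not> mu x (1 + p))" using blk[of "1 + p"] 4 by simp
    ultimately show False using x by (simp add: mu_nth)
  qed
qed

lemma overlap_free_pre_pre_mu:
  "overlap_free (pre a (pre a (mu x)))
    \<longleftrightarrow> overlap_free (pre (\<not> a) x) \<and> x 0 = (\<not> a) \<and> x 1 = a \<and> x 2 = (\<not> a)"
proof -
  have split: "overlap_free (pre a (pre a (mu x)))
      \<longleftrightarrow> overlap_free (pre (\<not> a) x) \<and> (\<forall>p. \<not> overlap_at (pre a (pre a (mu x))) 0 p)"
    using overlap_free_pre[of a "pre a (mu x)"] overlap_free_pre_mu[of a x] by simp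
  show ?thesis
  proof
    assume "overlap_free (pre a (pre a (mu x)))"
    then show "overlap_free (pre (\<not> a) x) \<and> x 0 = (\<not> a) \<and> x 1 = a \<and> x 2 = (\<not> a)"
      using split pre_pre_mu_forces_prefix by blast
  next
    assume "overlap_free (pre (\<not> a) x) \<and> x 0 = (\<not> a) \<and> x 1 = a \<and> x 2 = (\<not> a)"
    then show "overlap_free (pre a (pre a (mu x)))"
      using split pre_pre_mu_no_overlap_0[of x a] by blast
  qed
qed

lemma begins_1: "begins [b] x \<longleftrightarrow> x 0 = b"
  by (simp add: begins_def)

lemma begins_2: "begins [b, c] x \<longleftrightarrow> x 0 = b \<and> x 1 = c"
  by (auto simp: begins_def less_Suc_eq)

lemma begins_3: "begins [b, c, d] x \<longleftrightarrow> x 0 = b \<and> x 1 = c \<and> x 2 = d"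
proof -
  have below_3: "(\<forall>j<3. P j) \<longleftrightarrow> P 0 \<and> P 1 \<and> P 2" for P :: "nat \<Rightarrow> bool"
    by (auto simp: numeral_3_eq_3 numeral_2_eq_2 less_Suc_eq)
  have "begins [b, c, d] x \<longleftrightarrow> (\<forall>j<3. x j = [b, c, d] ! j)"
    unfolding begins_def by (simp add: numeral_3_eq_3)
  also have "\<dots> \<longleftrightarrow> x 0 = b \<and> x 1 = c \<and> x 2 = d"
    unfolding below_3 by simp
  finally show ?thesis .
qed

theorem lemma2:
  fixes x :: iword
  shows "(x \<in> SA \<longleftrightarrow> mu x \<in> SA)
   \<and> (x \<in> SB \<longleftrightarrow> pre L0 (mu x) \<in> SA)
   \<and> (x \<in> SC \<longleftrightarrow> pre L0 (pre L0 (mu x)) \<in> SA)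
   \<and> (x \<in> SD \<longleftrightarrow> pre L1 (mu x) \<in> SA)
   \<and> (x \<in> SE \<longleftrightarrow> pre L1 (pre L1 (mu x)) \<in> SA)
   \<and> (x \<in> SD \<longleftrightarrow> mu x \<in> SB)
   \<and> (x \<in> SB \<longleftrightarrow> pre L0 (mu x) \<in> SB)
   \<and> (x \<in> SE \<longleftrightarrow> pre L1 (mu x) \<in> SB)
   \<and> (x \<in> SB \<longleftrightarrow> mu x \<in> SD)
   \<and> (x \<in> SD \<longleftrightarrow> pre L1 (mu x) \<in> SD)
   \<and> (x \<in> SC \<longleftrightarrow> pre L0 (mu x) \<in> SD)
   \<and> (x \<in> SI \<longleftrightarrow> mu x \<in> SE)
   \<and> (x \<in> SC \<longleftrightarrow> pre L0 (mu x) \<in> SE)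
   \<and> (x \<in> SF \<longleftrightarrow> mu x \<in> SC)
   \<and> (x \<in> SE \<longleftrightarrow> pre L1 (mu x) \<in> SC)
   \<and> (x \<in> SJ \<longleftrightarrow> pre L0 (mu x) \<in> SI)
   \<and> (x \<in> SG \<longleftrightarrow> pre L1 (mu x) \<in> SF)
   \<and> (x \<in> SK \<longleftrightarrow> mu x \<in> SJ)
   \<and> (x \<in> SJ \<longleftrightarrow> mu x \<in> SK)
   \<and> (x \<in> SB \<longleftrightarrow> pre L0 (mu x) \<in> SJ)
   \<and> (x \<in> SC \<longleftrightarrow> pre L0 (mu x) \<in> SK)
   \<and> (x \<in> SH \<longleftrightarrow> mu x \<in> SG)
   \<and> (x \<in> SG \<longleftrightarrow> mu x \<in> SH)
   \<and> (x \<in> SD \<longleftrightarrow> pre L1 (mu x) \<in> SG)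
   \<and> (x \<in> SE \<longleftrightarrow> pre L1 (mu x) \<in> SH)"
proof -
  have mu_pre_L1: "pre L1 (pre L0 (mu x)) = mu (pre L1 x)"
    using mu_pre[of L1 x] by simp
  have mu_pre_L0: "pre L0 (pre L1 (mu x)) = mu (pre L0 x)"
    using mu_pre[of L0 x] by simp
  have pre_pre_mu_L0: "overlap_free (pre L0 (pre L0 (mu x)))
      \<longleftrightarrow> overlap_free (pre L1 x) \<and> x 0 \<and> \<not> x 1 \<and> x 2"
    using overlap_free_pre_pre_mu[of L0 x] by simp
  have pre_pre_mu_L1: "overlap_free (pre L1 (pre L1 (mu x)))
      \<longleftrightarrow> overlap_free (pre L0 x) \<and> \<not> x 0 \<and> x 1 \<and> \<not> x 2"
    using overlap_free_pre_pre_mu[of L1 x] by simp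
  have letters: "mu x 0 = x 0" "mu x (Suc 0) = (\<not> x 0)" "mu x 2 = x 1"
    "pre b y 1 = y 0" "pre b y 2 = y 1" for b y
    by (simp_all add: mu_nth pre_nth)
  show ?thesis
    unfolding SA_def SB_def SC_def SD_def SE_def SF_def SG_def SH_def SI_def SJ_def SK_def
      OF_def mem_Collect_eq begins_1 begins_2 begins_3 mu_pre_L1 mu_pre_L0
      pre_pre_mu_L0 pre_pre_mu_L1 overlap_free_mu overlap_free_pre_mu
    by (auto simp: letters)
qed

end
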